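(* Let $G=(V,E)$ be a finite simple graph of order $n$ and let $(x,z)$ be an optimal solution of the Fort Number Model $\mathrm{FN}(G)$. Then $\mathrm{ft}(G)=\sum_{i=1}^n z_i$.
   Context: $N(u)$ denotes the neighborhood of $u$. A fort of $G$ is a non-empty set $F\subseteq V$ such that no vertex $u\in V\setminus F$ has exactly one neighbor in $F$. The fort number $\mathrm{ft}(G)$ is the maximum cardinality of a collection of pairwise disjoint forts of $G$. The Fort Number Model $\mathrm{FN}(G)$ has binary variables $x_{iv}$ ($i\in\{1,\dots,n\}$, $v\in V$) and $z_i$ ($i\in\{1,\dots,n\}$), with constraints: $z_i-\sum_{u\in V}x_{iu}\leq0$ for all $i$; $x_{iu}-x_{iv}+\sum_{w\in N(u)\setminus\{v\}}x_{iw}\geq0$ for all $i$, all $v\in V$ and all $u\in N(v)$; $\sum_{i=1}^n x_{iu}\leq1$ for all $u\in V$; its objective is to maximize $\sum_{i=1}^n z_i$. *)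

theory Defs
  imports Main
begin

definition simple_graph :: "'a set \<Rightarrow> ('a \<Rightarrow> 'a \<Rightarrow> bool) \<Rightarrow> bool" where
  "simple_graph V E \<longleftrightarrow> finite V \<and> (\<forall>u v. E u v \<longrightarrow> u \<in> V \<and> v \<in> V)
     \<and> (\<forall>u v. E u v \<longrightarrow> E v u) \<and> (\<forall>u. \<not> E u u)"

definition nbhd :: "'a set \<Rightarrow> ('a \<Rightarrow> 'a \<Rightarrow> bool) \<Rightarrow> 'a \<Rightarrow> 'a set" where
  "nbhd V E u = {w \<in> V. E u w}"

definition is_fort :: "'a set \<Rightarrow> ('a \<Rightarrow> 'a \<Rightarrow> bool) \<Rightarrow> 'a set \<Rightarrow> bool" where
  "is_fort V E F \<longleftrightarrow> F \<noteq> {} \<and> F \<subseteq> V \<and>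
     (\<forall>u \<in> V - F. card (nbhd V E u \<inter> F) \<noteq> 1)"

definition disjoint_fort_collection :: "'a set \<Rightarrow> ('a \<Rightarrow> 'a \<Rightarrow> bool) \<Rightarrow> 'a set set \<Rightarrow> bool" where
  "disjoint_fort_collection V E C \<longleftrightarrow> (\<forall>F \<in> C. is_fort V E F)
     \<and> (\<forall>F1 \<in> C. \<forall>F2 \<in> C. F1 \<noteq> F2 \<longrightarrow> F1 \<inter> F2 = {})"

definition fort_number :: "'a set \<Rightarrow> ('a \<Rightarrow> 'a \<Rightarrow> bool) \<Rightarrow> nat" where
  "fort_number V E = Max {card C | C. disjoint_fort_collection V E C}"

definition FN_feasible :: "'a set \<Rightarrow> ('a \<Rightarrow> 'a \<Rightarrow> bool) \<Rightarrow> (nat \<Rightarrow> 'a \<Rightarrow> int) \<Rightarrow> (nat \<Rightarrow> int) \<Rightarrow> bool" where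
  "FN_feasible V E x z \<longleftrightarrow>
     (\<forall>i \<in> {1..card V}. \<forall>v \<in> V. x i v \<in> {0, 1}) \<and>
     (\<forall>i \<in> {1..card V}. z i \<in> {0, 1}) \<and>
     (\<forall>i \<in> {1..card V}. z i - (\<Sum>u\<in>V. x i u) \<le> 0) \<and>
     (\<forall>i \<in> {1..card V}. \<forall>v \<in> V. \<forall>u \<in> nbhd V E v.
        x i u - x i v + (\<Sum>w \<in> nbhd V E u - {v}. x i w) \<ge> 0) \<and>
     (\<forall>u \<in> V. (\<Sum>i=1..card V. x i u) \<le> 1)"

definition FN_objective :: "'a set \<Rightarrow> (nat \<Rightarrow> int) \<Rightarrow> int" where
  "FN_objective V z = (\<Sum>i=1..card V. z i)"

definition FN_optimal :: "'a set \<Rightarrow> ('a \<Rightarrow> 'a \<Rightarrow> bool) \<Rightarrow> (nat \<Rightarrow> 'a \<Rightarrow> int) \<Rightarrow> (nat \<Rightarrow> int) \<Rightarrow> bool" where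
  "FN_optimal V E x z \<longleftrightarrow> FN_feasible V E x z \<and>
     (\<forall>x' z'. FN_feasible V E x' z' \<longrightarrow> FN_objective V z' \<le> FN_objective V z)"

end

(* A 0/1 row x_i of a solution of FN(G) is the indicator of a vertex set F_i.  For an indicator,
   the neighbourhood constraints of row i hold exactly when no vertex outside F_i has precisely one
   neighbour in F_i, the column constraints say that the F_i are pairwise disjoint, and
   z_i <= sum_u x_iu allows z_i = 1 only for nonempty F_i.  So a feasible objective value counts
   pairwise disjoint forts and is at most ft(G).  Conversely, a maximum collection of disjoint forts
   has at most n members and, padded with empty rows, is a feasible solution of value ft(G). *)

theory Submission
  imports Defs "HOL-Library.Disjoint_Sets"
begin

(* The fort condition without nonemptiness, so that unused rows can be encoded by the empty set. *)
definition fort_closed :: "'a set \<Rightarrow> ('a \<Rightarrow> 'a \<Rightarrow> bool) \<Rightarrow> 'a set \<Rightarrow> bool" where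
  "fort_closed V E F \<longleftrightarrow> (\<forall>u \<in> V - F. card (nbhd V E u \<inter> F) \<noteq> 1)"

lemma is_fort_iff_fort_closed: "is_fort V E F \<longleftrightarrow> F \<noteq> {} \<and> F \<subseteq> V \<and> fort_closed V E F"
  by (simp add: is_fort_def fort_closed_def)

lemma disjoint_fort_collection_iff:
  "disjoint_fort_collection V E C \<longleftrightarrow> (\<forall>F \<in> C. is_fort V E F) \<and> disjoint C"
  by (auto simp: disjoint_fort_collection_def disjoint_def)

lemma disjoint_fort_collection_finite_card_le:
  assumes "finite V" and "disjoint_fort_collection V E C"
  shows "finite C" and "card C \<le> card V"
proof -
  have forts: "F \<noteq> {}" "F \<subseteq> V" if "F \<in> C" for F
    using assms(2) that by (auto simp: disjoint_fort_collection_iff is_fort_def)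
  have "disjoint C"
    using assms(2) by (simp add: disjoint_fort_collection_iff)
  show "finite C"
    using forts(2) assms(1) by (meson PowI finite_Pow_iff finite_subset subsetI)
  have fin_members: "finite F" if "F \<in> C" for F
    using forts(2)[OF that] assms(1) by (rule finite_subset)
  have "card C = (\<Sum>F\<in>C. 1)"
    by (rule card_eq_sum)
  also have "\<dots> \<le> (\<Sum>F\<in>C. card F)"
    using forts(1) fin_members by (intro sum_mono) (simp add: Suc_leI card_gt_0_iff)
  also have "\<dots> = card (\<Union>C)"
    using \<open>disjoint C\<close> fin_members by (simp add: card_Union_disjoint)
  also have "\<dots> \<le> card V"
    using forts(2) assms(1) by (intro card_mono) auto
  finally show "card C \<le> card V" .
qed

lemma finite_disjoint_fort_collection_cards:
  assumes "finite V"
  shows "finite {card C | C. disjoint_fort_collection V E C}"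
proof (rule finite_subset)
  show "{card C | C. disjoint_fort_collection V E C} \<subseteq> {..card V}"
    using disjoint_fort_collection_finite_card_le(2)[OF assms] by auto
qed simp

lemma card_le_fort_number:
  assumes "finite V" and "disjoint_fort_collection V E C"
  shows "card C \<le> fort_number V E"
  unfolding fort_number_def
  using assms(2) by (intro Max_ge[OF finite_disjoint_fort_collection_cards[OF assms(1)]]) blast

lemma fort_number_attained:
  assumes "finite V"
  obtains C where "disjoint_fort_collection V E C" and "card C = fort_number V E"
proof -
  have "disjoint_fort_collection V E {}"
    by (simp add: disjoint_fort_collection_def)
  then have "{card C | C. disjoint_fort_collection V E C} \<noteq> {}"
    by blast
  from Max_in[OF finite_disjoint_fort_collection_cards[OF assms] this] that show ?thesis
    unfolding fort_number_def by auto
qed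

lemma card_nonempty_disjoint_family_le_fort_number:
  assumes "finite V"
    and "disjoint_family_on F I"
    and "\<And>i. i \<in> I \<Longrightarrow> F i \<subseteq> V \<and> fort_closed V E (F i)"
  shows "card {i \<in> I. F i \<noteq> {}} \<le> fort_number V E"
proof -
  define J where "J = {i \<in> I. F i \<noteq> {}}"
  have "disjoint_family_on F J"
    using assms(2) by (rule disjoint_family_on_mono[rotated]) (auto simp: J_def)
  then have "disjoint (F ` J)" and "inj_on F J"
    using disjoint_family_on_iff_disjoint_image[of J F] by (auto simp: J_def)
  moreover have "\<forall>A \<in> F ` J. is_fort V E A"
    using assms(3) by (auto simp: J_def is_fort_iff_fort_closed)
  ultimately have "disjoint_fort_collection V E (F ` J)"
    by (simp add: disjoint_fort_collection_iff)
  with assms(1) have "card (F ` J) \<le> fort_number V E"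
    by (rule card_le_fort_number)
  with \<open>inj_on F J\<close> show ?thesis
    by (simp add: J_def card_image)
qed

lemma disjoint_family_on_iff_card_le_1:
  assumes "finite I"
  shows "disjoint_family_on F I \<longleftrightarrow> (\<forall>u. card {i \<in> I. u \<in> F i} \<le> 1)"
  using assms by (auto simp: disjoint_family_on_def card_le_Suc0_iff_eq)

lemma sum_of_bool_Diff_singleton:
  assumes "finite A"
  shows "(\<Sum>w \<in> A - {v}. of_bool (w \<in> F)) = int (card (A \<inter> F)) - of_bool (v \<in> A \<inter> F)"
proof (cases "v \<in> A")
  case True
  with assms have "(\<Sum>w \<in> A. of_bool (w \<in> F))
      = of_bool (v \<in> F) + (\<Sum>w \<in> A - {v}. (of_bool (w \<in> F) :: int))"
    by (rule sum.remove)
  with assms True show ?thesis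
    by simp
qed (use assms in simp)

lemma neighbour_constraints_iff_fort_closed:
  fixes F :: "'a set"
  assumes "finite V" and sym: "\<And>u v. E u v \<Longrightarrow> E v u"
  shows "(\<forall>v \<in> V. \<forall>u \<in> nbhd V E v.
            of_bool (u \<in> F) - of_bool (v \<in> F) + (\<Sum>w \<in> nbhd V E u - {v}. of_bool (w \<in> F)) \<ge> (0::int))
         \<longleftrightarrow> fort_closed V E F"
    (is "(\<forall>v \<in> V. \<forall>u \<in> nbhd V E v. ?constraint v u) \<longleftrightarrow> _")
proof -
  have adjacent: "u \<in> V \<and> v \<in> nbhd V E u" if "v \<in> V" "u \<in> nbhd V E v" for u v
    using that sym by (auto simp: nbhd_def)
  have constraint_iff: "?constraint v u \<longleftrightarrow> (u \<in> F \<or> v \<notin> F \<or> card (nbhd V E u \<inter> F) \<noteq> 1)"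
    if "v \<in> V" "u \<in> nbhd V E v" for u v
  proof -
    have "finite (nbhd V E u)"
      using assms(1) by (simp add: nbhd_def)
    then have "(\<Sum>w \<in> nbhd V E u - {v}. of_bool (w \<in> F))
        = int (card (nbhd V E u \<inter> F)) - of_bool (v \<in> F)"
      and "v \<in> F \<Longrightarrow> card (nbhd V E u \<inter> F) \<noteq> 0"
      using adjacent[OF that] sum_of_bool_Diff_singleton[where A = "nbhd V E u" and v = v and F = F] by auto
    then show ?thesis
      by auto
  qed
  show ?thesis
  proof
    assume constraints: "\<forall>v \<in> V. \<forall>u \<in> nbhd V E v. ?constraint v u"
    show "fort_closed V E F"
      unfolding fort_closed_def
    proof (intro ballI notI)
      fix u assume u: "u \<in> V - F" and single: "card (nbhd V E u \<inter> F) = 1"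
      then obtain v where v: "nbhd V E u \<inter> F = {v}"
        by (meson card_1_singletonE)
      then have "v \<in> V" and "u \<in> nbhd V E v" and "v \<in> F"
        using u sym by (auto simp: nbhd_def)
      with constraints have "?constraint v u"
        by blast
      with constraint_iff[OF \<open>v \<in> V\<close> \<open>u \<in> nbhd V E v\<close>] u single \<open>v \<in> F\<close> show False
        by simp
    qed
  next
    assume closed: "fort_closed V E F"
    show "\<forall>v \<in> V. \<forall>u \<in> nbhd V E v. ?constraint v u"
    proof (intro ballI)
      fix v u assume "v \<in> V" and "u \<in> nbhd V E v"
      moreover have "u \<in> V"
        using adjacent[OF calculation] by blast
      ultimately show "?constraint v u"
        using closed constraint_iff by (auto simp: fort_closed_def)
    qed
  qed
qed

lemma FN_feasible_of_disjoint_family: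
  assumes G: "simple_graph V E"
    and disj: "disjoint_family_on F {1..card V}"
    and closed: "\<And>i. i \<in> {1..card V} \<Longrightarrow> F i \<subseteq> V \<and> fort_closed V E (F i)"
  shows "FN_feasible V E (\<lambda>i v. of_bool (v \<in> F i)) (\<lambda>i. of_bool (F i \<noteq> {}))"
proof -
  have fin: "finite V" and sym: "\<And>u v. E u v \<Longrightarrow> E v u"
    using G by (auto simp: simple_graph_def)
  show ?thesis
    unfolding FN_feasible_def
  proof (intro conjI ballI)
    fix i assume i: "i \<in> {1..card V}"
    show "of_bool (F i \<noteq> {}) - (\<Sum>u \<in> V. of_bool (u \<in> F i)) \<le> (0::int)"
      using closed[OF i] finite_subset[OF _ fin] by (auto simp: Int_absorb1 Suc_le_eq card_gt_0_iff)
  next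
    fix i v u assume i: "i \<in> {1..card V}" and "v \<in> V" and "u \<in> nbhd V E v"
    show "of_bool (u \<in> F i) - of_bool (v \<in> F i) + (\<Sum>w \<in> nbhd V E u - {v}. of_bool (w \<in> F i)) \<ge> (0::int)"
      using neighbour_constraints_iff_fort_closed[where E = E, OF fin sym] closed[OF i]
        \<open>v \<in> V\<close> \<open>u \<in> nbhd V E v\<close> by blast
  next
    fix u
    have "card {i \<in> {1..card V}. u \<in> F i} \<le> 1"
      using disj by (simp add: disjoint_family_on_iff_card_le_1)
    then show "(\<Sum>i = 1..card V. of_bool (u \<in> F i)) \<le> (1::int)"
      by (simp add: Int_def)
  qed simp_all
qed

lemma FN_feasible_objective_le_fort_number:
  assumes G: "simple_graph V E" and feas: "FN_feasible V E x z"
  shows "(\<Sum>i = 1..card V. z i) \<le> int (fort_number V E)"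
proof -
  let ?I = "{1..card V}"
  have fin: "finite V" and sym: "\<And>u v. E u v \<Longrightarrow> E v u"
    using G by (auto simp: simple_graph_def)
  have x01: "\<And>i v. i \<in> ?I \<Longrightarrow> v \<in> V \<Longrightarrow> x i v \<in> {0, 1}"
    and z01: "\<And>i. i \<in> ?I \<Longrightarrow> z i \<in> {0, 1}"
    and z_le: "\<And>i. i \<in> ?I \<Longrightarrow> z i \<le> (\<Sum>u \<in> V. x i u)"
    and neighbour: "\<And>i. i \<in> ?I \<Longrightarrow> \<forall>v \<in> V. \<forall>u \<in> nbhd V E v.
        x i u - x i v + (\<Sum>w \<in> nbhd V E u - {v}. x i w) \<ge> 0"
    and column: "\<And>u. u \<in> V \<Longrightarrow> (\<Sum>i \<in> ?I. x i u) \<le> 1"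
    using feas unfolding FN_feasible_def by auto
  define F where "F i = {v \<in> V. x i v = 1}" for i
  have x_F: "x i v = of_bool (v \<in> F i)" if "i \<in> ?I" "v \<in> V" for i v
    using x01[OF that] that by (auto simp: F_def)
  have "finite (F i)" for i
    using fin by (simp add: F_def)
  have "z i \<le> of_bool (F i \<noteq> {})" if i: "i \<in> ?I" for i
  proof -
    have "(\<Sum>u \<in> V. x i u) = (\<Sum>u \<in> V. of_bool (u \<in> F i))"
      using x_F[OF i] by (intro sum.cong) auto
    also have "\<dots> = int (card (F i))"
      using fin by (simp add: F_def Int_absorb1 Collect_conj_eq)
    finally have "(\<Sum>u \<in> V. x i u) = int (card (F i))" .
    with z01[OF i] z_le[OF i] \<open>finite (F i)\<close> show ?thesis
      by auto
  qed
  then have "(\<Sum>i \<in> ?I. z i) \<le> (\<Sum>i \<in> ?I. of_bool (F i \<noteq> {}))"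
    by (rule sum_mono)
  also have "\<dots> = int (card {i \<in> ?I. F i \<noteq> {}})"
    by (simp add: Int_def)
  also have "card {i \<in> ?I. F i \<noteq> {}} \<le> fort_number V E"
  proof (rule card_nonempty_disjoint_family_le_fort_number[OF fin])
    have "card {i \<in> ?I. u \<in> F i} \<le> 1" for u
    proof (cases "u \<in> V")
      case True
      then have "(\<Sum>i \<in> ?I. x i u) = int (card {i \<in> ?I. u \<in> F i})"
        using x_F by (simp add: Int_def)
      with column[OF True] show ?thesis
        by simp
    qed (simp add: F_def)
    then show "disjoint_family_on F ?I"
      by (simp add: disjoint_family_on_iff_card_le_1)
  next
    fix i assume i: "i \<in> ?I"
    have "\<forall>v \<in> V. \<forall>u \<in> nbhd V E v. of_bool (u \<in> F i) - of_bool (v \<in> F i)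
            + (\<Sum>w \<in> nbhd V E u - {v}. of_bool (w \<in> F i)) \<ge> (0::int)"
      using neighbour[OF i] x_F[OF i] by (simp add: nbhd_def)
    then have "fort_closed V E (F i)"
      using neighbour_constraints_iff_fort_closed[where E = E and F = "F i", OF fin sym] by blast
    then show "F i \<subseteq> V \<and> fort_closed V E (F i)"
      by (simp add: F_def)
  qed
  finally show ?thesis
    by simp
qed

lemma FN_feasible_attaining_fort_number:
  assumes G: "simple_graph V E"
  obtains x z where "FN_feasible V E x z" and "(\<Sum>i = 1..card V. z i) = int (fort_number V E)"
proof -
  have fin: "finite V"
    using G by (simp add: simple_graph_def)
  obtain C where C: "disjoint_fort_collection V E C" and card_C: "card C = fort_number V E"
    using fort_number_attained[OF fin] by blast
  let ?k = "card C"
  have "finite C" and "?k \<le> card V"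
    using disjoint_fort_collection_finite_card_le[OF fin C] by simp_all
  then obtain f where f: "bij_betw f {1..?k} C"
    using ex_bij_betw_nat_finite_1 by blast
  have forts: "\<forall>A \<in> C. is_fort V E A" and "disjoint C"
    using C by (simp_all add: disjoint_fort_collection_iff)
  define F where "F i = (if i \<in> {1..?k} then f i else {})" for i
  have F_nonempty: "F i \<noteq> {} \<longleftrightarrow> i \<in> {1..?k}" for i
    using forts f by (auto simp: F_def is_fort_def bij_betw_apply)
  have "disjoint_family_on F {1..card V}"
  proof -
    have "disjoint_family_on f {1..?k}"
      using disjoint_image_disjoint_family_on[of f "{1..?k}"] \<open>disjoint C\<close> f
      by (simp add: bij_betw_def)
    then show ?thesis
      by (auto simp: disjoint_family_on_def F_def)
  qed
  moreover have "F i \<subseteq> V \<and> fort_closed V E (F i)" for i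
    using forts f by (auto simp: F_def is_fort_iff_fort_closed bij_betw_apply fort_closed_def)
  ultimately have "FN_feasible V E (\<lambda>i v. of_bool (v \<in> F i)) (\<lambda>i. of_bool (F i \<noteq> {}))"
    using G by (intro FN_feasible_of_disjoint_family)
  moreover have "{1..card V} \<inter> {i. F i \<noteq> {}} = {1..?k}"
    using F_nonempty \<open>?k \<le> card V\<close> by auto
  then have "(\<Sum>i = 1..card V. of_bool (F i \<noteq> {})) = int (fort_number V E)"
    using card_C by simp
  ultimately show ?thesis
    by (rule that)
qed

theorem corollary7p3:
  fixes V :: "'a set" and E :: "'a \<Rightarrow> 'a \<Rightarrow> bool"
    and x :: "nat \<Rightarrow> 'a \<Rightarrow> int" and z :: "nat \<Rightarrow> int"
  assumes "simple_graph V E"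
    and "FN_optimal V E x z"
  shows "int (fort_number V E) = (\<Sum>i=1..card V. z i)"
proof (rule antisym)
  obtain x' z' where "FN_feasible V E x' z'" and "(\<Sum>i = 1..card V. z' i) = int (fort_number V E)"
    using FN_feasible_attaining_fort_number[OF assms(1)] .
  moreover from this(1) have "FN_objective V z' \<le> FN_objective V z"
    using assms(2) by (simp add: FN_optimal_def)
  ultimately show "int (fort_number V E) \<le> (\<Sum>i = 1..card V. z i)"
    by (simp add: FN_objective_def)
  have "FN_feasible V E x z"
    using assms(2) by (simp add: FN_optimal_def)
  then show "(\<Sum>i = 1..card V. z i) \<le> int (fort_number V E)"
    by (rule FN_feasible_objective_le_fort_number[OF assms(1)])
qed

end
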